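(* Let $0<\varepsilon<1$. For $n,k\in\mathbb N$ with $k$ even and $k<n$, define $K_i=\{\frac{i-1}2k,\dots,\frac i2k-1\}$ for $i=1,\dots,\lceil 2n/k\rceil-1$ and $K_{\lceil2n/k\rceil}=\{\frac{\lceil2n/k\rceil-1}{2}k,\dots,n-1\}$; for $S\subset n^*=\{0,\dots,n-1\}$ let $B(S)=\operatorname{card}\{i:S\cap K_i\neq\emptyset\}$, and let $\mathcal B(n,k,\varepsilon)=\{S\subset n^*:B(S)\le(2n/k)(1-\varepsilon)\}$. Then there exists an even $k\in\mathbb N$ such that $\lim_{n\to\infty}\operatorname{card}(\mathcal B(n,k,\varepsilon))/2^n=0$. *)

theory Defs
  imports Complex_Main
begin

definition nblocks :: "nat \<Rightarrow> nat \<Rightarrow> nat" where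
  "nblocks n k = nat \<lceil>2 * real n / real k\<rceil>"

definition blockK :: "nat \<Rightarrow> nat \<Rightarrow> nat \<Rightarrow> nat set" where
  "blockK n k i =
     (if i < nblocks n k then {(i - 1) * (k div 2) .. i * (k div 2) - 1}
      else {(nblocks n k - 1) * (k div 2) .. n - 1})"

definition Bcount :: "nat \<Rightarrow> nat \<Rightarrow> nat set \<Rightarrow> nat" where
  "Bcount n k S = card {i \<in> {1..nblocks n k}. S \<inter> blockK n k i \<noteq> {}}"

definition Bset :: "nat \<Rightarrow> nat \<Rightarrow> real \<Rightarrow> nat set set" where
  "Bset n k \<epsilon> = {S. S \<subseteq> {0..<n} \<and>
      real (Bcount n k S) \<le> (2 * real n / real k) * (1 - \<epsilon>)}"

end

theory Submission imports Defs begin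

text \<open>Take \<open>k = 2N\<close> with \<open>N > 1/\<epsilon>\<close>. Then every block has at most \<open>N\<close> elements and there
  are at most \<open>n/N + 1\<close> blocks. A set in \<open>\<B>(n,k,\<epsilon>)\<close> lies in the union of the at most
  \<open>n(1-\<epsilon>)/N\<close> blocks it meets, a union of at most \<open>n(1-\<epsilon>)\<close> elements; choosing these blocks
  and then a subset of their union gives \<open>card \<B>(n,k,\<epsilon>) \<le> 2^(n/N + 1) \<cdot> 2^(n(1-\<epsilon>))\<close>,
  so \<open>card \<B>(n,k,\<epsilon>) / 2^n \<le> 2 \<cdot> 2^((1/N - \<epsilon>) n)\<close>, which tends to \<open>0\<close>.\<close>

lemma card_subsets_meeting_few_sets_le:
  assumes "finite J" and "\<And>j. j \<in> J \<Longrightarrow> finite (B j)" and "\<And>j. j \<in> J \<Longrightarrow> card (B j) \<le> N"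
  shows "card {S. S \<subseteq> (\<Union>j\<in>J. B j) \<and> card {j \<in> J. S \<inter> B j \<noteq> {}} \<le> m}
           \<le> 2 ^ card J * 2 ^ (m * N)"
proof -
  define F where "F = {I. I \<subseteq> J \<and> card I \<le> m}"
  define U where "U I = (\<Union>j\<in>I. B j)" for I
  have finF: "finite F" unfolding F_def using assms(1) by auto
  have finU: "finite (U I)" if "I \<in> F" for I
    using that assms(1,2) unfolding F_def U_def by (auto intro: finite_subset)
  have "{S. S \<subseteq> (\<Union>j\<in>J. B j) \<and> card {j \<in> J. S \<inter> B j \<noteq> {}} \<le> m} \<subseteq> (\<Union>I\<in>F. Pow (U I))"
  proof
    fix S assume S: "S \<in> {S. S \<subseteq> (\<Union>j\<in>J. B j) \<and> card {j \<in> J. S \<inter> B j \<noteq> {}} \<le> m}"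
    then have "S \<subseteq> U {j \<in> J. S \<inter> B j \<noteq> {}}" unfolding U_def by blast
    moreover have "{j \<in> J. S \<inter> B j \<noteq> {}} \<in> F" using S unfolding F_def by auto
    ultimately show "S \<in> (\<Union>I\<in>F. Pow (U I))" by blast
  qed
  then have "card {S. S \<subseteq> (\<Union>j\<in>J. B j) \<and> card {j \<in> J. S \<inter> B j \<noteq> {}} \<le> m}
               \<le> card (\<Union>I\<in>F. Pow (U I))"
    by (rule card_mono[rotated]) (use finF finU in auto)
  also have "\<dots> \<le> (\<Sum>I\<in>F. card (Pow (U I)))" by (rule card_UN_le[OF finF])
  also have "\<dots> \<le> (\<Sum>I\<in>F. 2 ^ (m * N))"
  proof (rule sum_mono)
    fix I assume I: "I \<in> F"
    then have "card (U I) \<le> (\<Sum>j\<in>I. card (B j))"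
      unfolding U_def F_def using assms(1) by (auto intro: card_UN_le finite_subset)
    also have "\<dots> \<le> card I * N"
      using I assms(3) sum_bounded_above[of I "\<lambda>j. card (B j)" N] unfolding F_def by auto
    also have "\<dots> \<le> m * N" using I unfolding F_def by simp
    finally show "card (Pow (U I)) \<le> 2 ^ (m * N)"
      by (simp add: card_Pow finU[OF I] power_increasing)
  qed
  also have "\<dots> = card F * 2 ^ (m * N)" by simp
  also have "card F \<le> 2 ^ card J"
    using card_mono[of "Pow J" F] assms(1) by (auto simp: F_def card_Pow)
  finally show ?thesis by simp
qed

lemma nblocks_double_ge: assumes "N > 0" shows "n \<le> nblocks n (2 * N) * N"
proof -
  have "real n / real N \<le> real (nblocks n (2 * N))"
    using le_of_int_ceiling[of "2 * real n / real (2 * N)"] assms by (simp add: nblocks_def)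
  then have "real n \<le> real (nblocks n (2 * N)) * real N" using assms by (simp add: field_simps)
  then show ?thesis by (simp flip: of_nat_mult)
qed

lemma nblocks_double_le: assumes "N > 0" shows "real (nblocks n (2 * N)) \<le> real n / real N + 1"
  using of_int_ceiling_le_add_one[of "2 * real n / real (2 * N)"] assms by (simp add: nblocks_def)

lemma blockK_double_subset:
  assumes "N > 0" and "i \<in> {1..nblocks n (2 * N)}"
  shows "blockK n (2 * N) i \<subseteq> {(i - 1) * N ..< i * N}"
proof (cases "i < nblocks n (2 * N)")
  case True
  moreover have "i * N - 1 < i * N" using assms by simp
  ultimately show ?thesis by (auto simp: blockK_def intro: le_less_trans)
next
  case False
  then have "i = nblocks n (2 * N)" using assms(2) by simp
  moreover have "0 < n" using assms(2) by (cases n) (auto simp: nblocks_def)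
  ultimately show ?thesis using nblocks_double_ge[OF assms(1), of n] by (auto simp: blockK_def)
qed

lemma card_blockK_double_le:
  assumes "N > 0" and "i \<in> {1..nblocks n (2 * N)}"
  shows "card (blockK n (2 * N) i) \<le> N"
proof -
  have "card (blockK n (2 * N) i) \<le> card {(i - 1) * N ..< i * N}"
    by (rule card_mono[OF _ blockK_double_subset[OF assms]]) simp
  also have "\<dots> = N" using assms(2) by (cases i) auto
  finally show ?thesis .
qed

lemma blockK_double_cover:
  assumes "N > 0"
  shows "{0..<n} \<subseteq> (\<Union>i\<in>{1..nblocks n (2 * N)}. blockK n (2 * N) i)"
proof
  fix x assume "x \<in> {0..<n}"
  then have x: "x < n" by simp
  define nb where "nb = nblocks n (2 * N)"
  have "n \<le> nb * N" using nblocks_double_ge[OF assms] by (simp add: nb_def)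
  then have nb1: "1 \<le> nb" using x by (cases nb) auto
  have low: "x div N * N \<le> x" and high: "x < (x div N + 1) * N"
    using div_mult_mod_eq[of x N] mod_less_divisor[OF assms, of x] unfolding distrib_right
    by linarith+
  show "x \<in> (\<Union>i\<in>{1..nb}. blockK n (2 * N) i)"
  proof (cases "x div N + 1 < nb")
    case True
    then have "x \<in> blockK n (2 * N) (x div N + 1)"
      using low high by (auto simp: blockK_def nb_def[symmetric])
    with True show ?thesis by auto
  next
    case False
    then have "(nb - 1) * N \<le> x div N * N" by (intro mult_right_mono) simp_all
    with low have "(nb - 1) * N \<le> x" by linarith
    then have "x \<in> blockK n (2 * N) nb" using low x by (auto simp: blockK_def nb_def[symmetric])
    with nb1 show ?thesis by auto
  qed
qed

lemma card_Bset_double_le: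
  assumes "N > 0" and "\<epsilon> \<le> 1"
  shows "real (card (Bset n (2 * N) \<epsilon>)) \<le> 2 ^ nblocks n (2 * N) * 2 powr (real n * (1 - \<epsilon>))"
proof -
  define J where "J = {1..nblocks n (2 * N)}"
  define m where "m = nat \<lfloor>real n * (1 - \<epsilon>) / real N\<rfloor>"
  define Few where "Few = {S. S \<subseteq> (\<Union>i\<in>J. blockK n (2 * N) i) \<and>
                              card {i \<in> J. S \<inter> blockK n (2 * N) i \<noteq> {}} \<le> m}"
  have "Bset n (2 * N) \<epsilon> \<subseteq> Few"
  proof
    fix S assume S: "S \<in> Bset n (2 * N) \<epsilon>"
    then have "S \<subseteq> (\<Union>i\<in>J. blockK n (2 * N) i)"
      using blockK_double_cover[OF assms(1), of n] by (auto simp: Bset_def J_def)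
    moreover have "real (card {i \<in> J. S \<inter> blockK n (2 * N) i \<noteq> {}}) \<le> real n * (1 - \<epsilon>) / real N"
      using S by (simp add: Bset_def Bcount_def J_def)
    then have "card {i \<in> J. S \<inter> blockK n (2 * N) i \<noteq> {}} \<le> m"
      unfolding m_def by (simp add: le_nat_floor)
    ultimately show "S \<in> Few" by (simp add: Few_def)
  qed
  moreover have "finite Few"
    by (rule finite_subset[of _ "Pow (\<Union>i\<in>J. blockK n (2 * N) i)"])
      (auto simp: Few_def J_def blockK_def)
  ultimately have "card (Bset n (2 * N) \<epsilon>) \<le> card Few" by (rule card_mono[rotated])
  also have "\<dots> \<le> 2 ^ card J * 2 ^ (m * N)"
    unfolding Few_def
  proof (rule card_subsets_meeting_few_sets_le)
    fix i assume "i \<in> J"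
    then show "card (blockK n (2 * N) i) \<le> N" by (simp add: J_def card_blockK_double_le[OF assms(1)])
  qed (simp_all add: J_def blockK_def)
  finally have "real (card (Bset n (2 * N) \<epsilon>)) \<le> real (2 ^ card J * 2 ^ (m * N))"
    by (simp only: of_nat_le_iff)
  also have "\<dots> = 2 ^ nblocks n (2 * N) * 2 ^ (m * N)" by (simp add: J_def)
  also have "(2::real) ^ (m * N) \<le> 2 powr (real n * (1 - \<epsilon>))"
  proof -
    have "real m \<le> real n * (1 - \<epsilon>) / real N" using assms(2) by (simp add: m_def)
    then have "real (m * N) \<le> real n * (1 - \<epsilon>)" using assms(1) by (simp add: field_simps)
    then show ?thesis by (simp add: powr_realpow[symmetric])
  qed
  finally show ?thesis by simp
qed

lemma card_Bset_double_ratio_le: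
  assumes "N > 0" and "\<epsilon> \<le> 1"
  shows "real (card (Bset n (2 * N) \<epsilon>)) / 2 ^ n \<le> 2 * (2 powr (1 / real N - \<epsilon>)) ^ n"
proof -
  have "real (card (Bset n (2 * N) \<epsilon>)) \<le> 2 powr real (nblocks n (2 * N)) * 2 powr (real n * (1 - \<epsilon>))"
    using card_Bset_double_le[OF assms] by (simp add: powr_realpow)
  also have "\<dots> \<le> 2 powr (real n / real N + 1) * 2 powr (real n * (1 - \<epsilon>))"
    using nblocks_double_le[OF assms(1)] by simp
  also have "\<dots> = 2 powr (1 + (1 / real N - \<epsilon>) * real n) * 2 powr real n"
    by (simp add: powr_add[symmetric] algebra_simps)
  also have "\<dots> = 2 * (2 powr (1 / real N - \<epsilon>)) ^ n * 2 ^ n"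
    by (simp add: powr_add powr_powr[symmetric] powr_realpow)
  finally show ?thesis by (simp add: divide_le_eq)
qed

theorem lemma3p2:
  fixes \<epsilon> :: real
  assumes "0 < \<epsilon>" and "\<epsilon> < 1"
  shows "\<exists>k::nat. k > 0 \<and> even k \<and>
           (\<lambda>n. real (card (Bset n k \<epsilon>)) / 2 ^ n) \<longlonglongrightarrow> 0"
proof -
  define N where "N = nat \<lceil>1 / \<epsilon>\<rceil> + 1"
  have N: "N > 0" by (simp add: N_def)
  have "1 / \<epsilon> < real N" unfolding N_def by linarith
  then have "1 / real N < \<epsilon>" using assms N by (simp add: field_simps)
  then have "2 powr (1 / real N - \<epsilon>) < 1" by (simp add: powr_less_one)
  then have bound_lim: "(\<lambda>n. 2 * (2 powr (1 / real N - \<epsilon>)) ^ n) \<longlonglongrightarrow> 0"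
    by (intro tendsto_mult_right_zero LIMSEQ_power_zero) simp
  have "(\<lambda>n. real (card (Bset n (2 * N) \<epsilon>)) / 2 ^ n) \<longlonglongrightarrow> 0"
    by (rule tendsto_sandwich[OF _ _ tendsto_const bound_lim])
      (simp_all add: card_Bset_double_ratio_le[OF N less_imp_le[OF assms(2)]])
  then show ?thesis using N by (intro exI[of _ "2 * N"]) auto
qed

end
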